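(* Let $\beta\ge1$ and consider the GBDF3 coefficients $(a_0,a_1,a_2)=\big(\tfrac{3\beta^2+6\beta+2}{6},\tfrac{-6\beta^2-6\beta+5}{6},\tfrac{3\beta^2-1}{6}\big)$, $(b_0,\dots,b_3)=\big(\tfrac{\beta^2+\beta}{2},1-\beta^2,\tfrac{\beta^2-\beta}{2},0\big)$, $(c_0,c_1,c_2)=\big(\tfrac{\beta^2+3\beta+2}{2},-2\beta-\beta^2,\tfrac{\beta^2+\beta}{2}\big)$. Then $$\sigma_{\mathrm{F}}=1,\quad\sigma_{\mathrm{E}}=\frac{6\beta^2+12\beta+3}{6\beta^2+6\beta-2},\quad\frac{6\beta^2-4}{6\beta^2+6\beta-2}\le\lambda_{\mathrm{I}}\le\frac{6\beta^2-3}{6\beta^2+6\beta-2},$$ so that $\dfrac{6\beta^2-4}{6\beta^2+12\beta+3}\le\mathfrak{I}_{\mathrm{IE}}\le\dfrac{6\beta^2-3}{6\beta^2+12\beta+3}$.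
   Context: For coefficient vectors $(a_j)_{j=0}^{\mathrm{k}-1}$, $(b_j)_{j=0}^{\mathrm{k}}$, $(c_j)_{j=0}^{\mathrm{k}-1}$ define $a(\theta)=\sum_j a_je^{\imath j\theta}$, $b(\theta)=\sum_j b_je^{\imath j\theta}$, $c(\theta)=\sum_jc_je^{\imath j\theta}$ and $\sigma_{\mathrm{F}}=\max_{\theta\in[0,2\pi)}|1/a(\theta)|$, $\sigma_{\mathrm{E}}=\max_{\theta\in[0,2\pi)}|c(\theta)/a(\theta)|$, $\lambda_{\mathrm{I}}=\min_{\theta\in[0,2\pi)}\Re[b(\theta)/a(\theta)]$, $\mathfrak{I}_{\mathrm{IE}}=\lambda_{\mathrm{I}}/\sigma_{\mathrm{E}}$. Here $\mathrm{k}=3$. *)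

theory Defs
  imports "HOL-Analysis.Analysis"
begin

definition trig_poly :: "nat \<Rightarrow> (nat \<Rightarrow> real) \<Rightarrow> real \<Rightarrow> complex" where
  "trig_poly n p \<theta> = (\<Sum>j<n. complex_of_real (p j) * exp (\<i> * of_nat j * complex_of_real \<theta>))"

text \<open>With k steps: a, c have k coefficients (indices 0..k-1), b has k+1 (indices 0..k).\<close>
definition sigma_F :: "nat \<Rightarrow> (nat \<Rightarrow> real) \<Rightarrow> real" where
  "sigma_F k a = (SUP \<theta>\<in>{0..<2*pi}. cmod (1 / trig_poly k a \<theta>))"

definition sigma_E :: "nat \<Rightarrow> (nat \<Rightarrow> real) \<Rightarrow> (nat \<Rightarrow> real) \<Rightarrow> real" where
  "sigma_E k a c = (SUP \<theta>\<in>{0..<2*pi}. cmod (trig_poly k c \<theta> / trig_poly k a \<theta>))"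

definition lambda_I :: "nat \<Rightarrow> (nat \<Rightarrow> real) \<Rightarrow> (nat \<Rightarrow> real) \<Rightarrow> real" where
  "lambda_I k a b = (INF \<theta>\<in>{0..<2*pi}. Re (trig_poly (Suc k) b \<theta> / trig_poly k a \<theta>))"

definition I_IE :: "nat \<Rightarrow> (nat \<Rightarrow> real) \<Rightarrow> (nat \<Rightarrow> real) \<Rightarrow> (nat \<Rightarrow> real) \<Rightarrow> real" where
  "I_IE k a b c = lambda_I k a b / sigma_E k a c"

definition gbdf3_a :: "real \<Rightarrow> nat \<Rightarrow> real" where
  "gbdf3_a \<beta> j = (if j = 0 then (3*\<beta>^2 + 6*\<beta> + 2)/6
                  else if j = 1 then (-6*\<beta>^2 - 6*\<beta> + 5)/6
                  else if j = 2 then (3*\<beta>^2 - 1)/6 else 0)"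

definition gbdf3_b :: "real \<Rightarrow> nat \<Rightarrow> real" where
  "gbdf3_b \<beta> j = (if j = 0 then (\<beta>^2 + \<beta>)/2
                  else if j = 1 then 1 - \<beta>^2
                  else if j = 2 then (\<beta>^2 - \<beta>)/2 else 0)"

definition gbdf3_c :: "real \<Rightarrow> nat \<Rightarrow> real" where
  "gbdf3_c \<beta> j = (if j = 0 then (\<beta>^2 + 3*\<beta> + 2)/2
                  else if j = 1 then -2*\<beta> - \<beta>^2
                  else if j = 2 then (\<beta>^2 + \<beta>)/2 else 0)"

end

theory Submission
  imports Defs
begin

(* With x = cos \<theta>, both |p(\<theta>)|^2 and Re (b(\<theta>) * cnj (a(\<theta>))) are quadratic polynomials
   in x, so each estimate is a sign condition for a quadratic on [-1, 1].  Writing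
   D = 6\<beta>^2 + 6\<beta> - 2 and N = 6\<beta>^2 + 12\<beta> + 3: |a|^2 - 1 has the factor 1 - x and vanishes at
   \<theta> = 0; D^2 |c|^2 - N^2 |a|^2 has the factor x + 1 and vanishes at \<theta> = \<pi>; and
   D Re (b cnj a) - (6\<beta>^2 - 4) |a|^2 has negative discriminant and positive leading coefficient.
   So the suprema are attained at \<theta> = 0 and \<theta> = \<pi>, and the value of Re (b/a) at \<theta> = \<pi>
   gives the upper bound for \<lambda>_I. *)

lemma trig_poly_3:
  "trig_poly 3 p t = Complex (p 0 + p 1 * cos t + p 2 * cos (2*t)) (p 1 * sin t + p 2 * sin (2*t))"
proof -
  have exp_cis: "exp (\<i> * of_nat j * complex_of_real t) = cis (real j * t)" for j
    by (simp add: cis_conv_exp mult.commute mult.left_commute)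
  show ?thesis
    unfolding trig_poly_def
    by (simp add: numeral_3_eq_3 numeral_2_eq_2 lessThan_Suc exp_cis complex_eq_iff)
qed

lemma trig_poly_Suc_eq:
  "p n = 0 \<Longrightarrow> trig_poly (Suc n) p t = trig_poly n p t"
  unfolding trig_poly_def by simp

lemma trig_poly_3_at_0: "trig_poly 3 p 0 = complex_of_real (p 0 + p 1 + p 2)"
  unfolding trig_poly_3 by (simp add: complex_eq_iff)

lemma trig_poly_3_at_pi: "trig_poly 3 p pi = complex_of_real (p 0 - p 1 + p 2)"
  unfolding trig_poly_3 by (simp add: complex_eq_iff)

(* Re (p(\<theta>) * cnj (q(\<theta>))) = \<Sum> p_j q_k cos ((j - k)\<theta>), written in x = cos \<theta> via cos 2\<theta> = 2x^2 - 1. *)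
definition trig3_corr :: "(nat \<Rightarrow> real) \<Rightarrow> (nat \<Rightarrow> real) \<Rightarrow> real \<Rightarrow> real" where
  "trig3_corr p q x =
     (p 0*q 0 + p 1*q 1 + p 2*q 2) + (p 0*q 1 + p 1*q 0 + p 1*q 2 + p 2*q 1) * x
     + (p 0*q 2 + p 2*q 0) * (2*x^2 - 1)"

lemma trig_poly_3_inner:
  "Re (trig_poly 3 p t) * Re (trig_poly 3 q t) + Im (trig_poly 3 p t) * Im (trig_poly 3 q t)
     = trig3_corr p q (cos t)"
proof -
  have "sin t ^ 2 = 1 - cos t ^ 2" by (simp add: sin_squared_eq)
  then show ?thesis
    unfolding trig_poly_3 trig3_corr_def complex.sel cos_double sin_double by algebra
qed

lemma norm_trig_poly_3_squared: "(cmod (trig_poly 3 p t))\<^sup>2 = trig3_corr p p (cos t)"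
  unfolding cmod_power2 using trig_poly_3_inner[of p t p] by (simp add: power2_eq_square)

lemma Re_divide_trig_poly_3:
  "Re (trig_poly 3 p t / trig_poly 3 q t) = trig3_corr p q (cos t) / trig3_corr q q (cos t)"
  unfolding Re_divide' trig_poly_3_inner norm_trig_poly_3_squared ..

lemma gbdf3_coeffs:
  "gbdf3_a \<beta> 0 = (3*\<beta>^2 + 6*\<beta> + 2)/6" "gbdf3_a \<beta> 1 = (-6*\<beta>^2 - 6*\<beta> + 5)/6"
  "gbdf3_a \<beta> 2 = (3*\<beta>^2 - 1)/6"
  "gbdf3_b \<beta> 0 = (\<beta>^2 + \<beta>)/2" "gbdf3_b \<beta> 1 = 1 - \<beta>^2" "gbdf3_b \<beta> 2 = (\<beta>^2 - \<beta>)/2"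
  "gbdf3_b \<beta> 3 = 0"
  "gbdf3_c \<beta> 0 = (\<beta>^2 + 3*\<beta> + 2)/2" "gbdf3_c \<beta> 1 = -2*\<beta> - \<beta>^2"
  "gbdf3_c \<beta> 2 = (\<beta>^2 + \<beta>)/2"
  by (simp_all add: gbdf3_a_def gbdf3_b_def gbdf3_c_def)

lemma gbdf3_a_corr_ge_1:
  fixes \<beta> x :: real
  assumes "\<beta> \<ge> 1" and "-1 \<le> x" "x \<le> 1"
  shows "trig3_corr (gbdf3_a \<beta>) (gbdf3_a \<beta>) x \<ge> 1"
proof -
  define Q where "Q = \<beta>^4 + 2*\<beta>^3 + \<beta>^2/3 - 2*\<beta>/3"
  have factored: "trig3_corr (gbdf3_a \<beta>) (gbdf3_a \<beta>) x - 1 = (1 - x) * ((Q - 1/18) - x * (Q - 2/9))"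
    unfolding trig3_corr_def gbdf3_coeffs Q_def by algebra
  have "\<beta>^3 \<ge> 1" "\<beta>^4 \<ge> 1" using assms(1) by (simp_all add: one_le_power)
  moreover have "(\<beta> - 1)^2 \<ge> 0" by simp
  ultimately have "Q \<ge> 2/9" unfolding Q_def by (simp add: power2_eq_square algebra_simps)
  with assms(3) have "x * (Q - 2/9) \<le> Q - 2/9"
    using mult_right_mono[of x 1 "Q - 2/9"] by simp
  then have "(1 - x) * ((Q - 1/18) - x * (Q - 2/9)) \<ge> 0" using assms(3) by simp
  then show ?thesis using factored by simp
qed

lemma gbdf3_c_corr_le:
  fixes \<beta> x :: real
  assumes "\<beta> \<ge> 1" and "-1 \<le> x" "x \<le> 1"
  shows "(6*\<beta>^2 + 6*\<beta> - 2)^2 * trig3_corr (gbdf3_c \<beta>) (gbdf3_c \<beta>) x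
           \<le> (6*\<beta>^2 + 12*\<beta> + 3)^2 * trig3_corr (gbdf3_a \<beta>) (gbdf3_a \<beta>) x"
proof -
  define s2 where "s2 = 3*\<beta>^4 + 30*\<beta>^3 + 57*\<beta>^2 + 30*\<beta> + 2"
  define s1 where "s1 = -72*\<beta>^3 - 168*\<beta>^2 - 96*\<beta> - 5"
  have factored:
    "(6*\<beta>^2 + 6*\<beta> - 2)^2 * trig3_corr (gbdf3_c \<beta>) (gbdf3_c \<beta>) x
       - (6*\<beta>^2 + 12*\<beta> + 3)^2 * trig3_corr (gbdf3_a \<beta>) (gbdf3_a \<beta>) x
     = (x + 1) * (s2 * (x - 1) + s1 / 2)"
    unfolding trig3_corr_def gbdf3_coeffs s1_def s2_def
    by (simp add: field_simps power2_eq_square power3_eq_cube power4_eq_xxxx; algebra)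
  have "\<beta>^2 \<ge> 0" "\<beta>^3 \<ge> 0" "\<beta>^4 \<ge> 0" using assms(1) by simp_all
  then have "s2 \<ge> 0" "s1 \<le> 0" using assms(1) unfolding s1_def s2_def by linarith+
  moreover from this(1) assms(3) have "s2 * (x - 1) \<le> 0" by (simp add: mult_nonneg_nonpos)
  ultimately have "s2 * (x - 1) + s1 / 2 \<le> 0" by linarith
  then have "(x + 1) * (s2 * (x - 1) + s1 / 2) \<le> 0" using assms(2) by (simp add: mult_nonneg_nonpos)
  then show ?thesis using factored by simp
qed

lemma gbdf3_b_corr_ge:
  fixes \<beta> x :: real
  assumes "\<beta> \<ge> 1"
  shows "(6*\<beta>^2 - 4) * trig3_corr (gbdf3_a \<beta>) (gbdf3_a \<beta>) x
           < (6*\<beta>^2 + 6*\<beta> - 2) * trig3_corr (gbdf3_b \<beta>) (gbdf3_a \<beta>) x"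
proof -
  define l0 where "l0 = 19/9 + 10/3*\<beta> - 2/3*\<beta>^2 + 2*\<beta>^3 + \<beta>^4"
  define l1 where "l1 = 7/9 + 13/3*\<beta> - 2/3*\<beta>^2 - 4*\<beta>^3 - 2*\<beta>^4"
  define l2 where "l2 = -8/9 - 5/3*\<beta> + 4/3*\<beta>^2 + 2*\<beta>^3 + \<beta>^4"
  have quadratic:
    "(6*\<beta>^2 + 6*\<beta> - 2) * trig3_corr (gbdf3_b \<beta>) (gbdf3_a \<beta>) x
       - (6*\<beta>^2 - 4) * trig3_corr (gbdf3_a \<beta>) (gbdf3_a \<beta>) x = l0 + l1*x + l2*x^2"
    unfolding trig3_corr_def gbdf3_coeffs l0_def l1_def l2_def
    by (simp add: field_simps power2_eq_square power3_eq_cube power4_eq_xxxx; algebra)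
  have discriminant: "l1^2 - 4*l0*l2 = 73/9 + 98/3*\<beta> + 79/3*\<beta>^2 - 44*\<beta>^3 - 52*\<beta>^4 - 24*\<beta>^5"
    unfolding l0_def l1_def l2_def
    by (simp add: field_simps power2_eq_square power3_eq_cube power4_eq_xxxx; algebra)
  have powers: "\<beta> \<le> \<beta>^2" "\<beta>^2 \<le> \<beta>^3" "\<beta>^3 \<le> \<beta>^4" "\<beta>^4 \<le> \<beta>^5"
    using assms by (simp_all add: power_increasing[of 1 2, simplified] power_increasing)
  then have "l1^2 - 4*l0*l2 < 0" using assms unfolding discriminant by linarith
  moreover have "l2 > 0"
  proof -
    have "4*\<beta>^2 - 5*\<beta> + 1 = 4*(\<beta> - 1)^2 + 3*(\<beta> - 1)"
      by (simp add: power2_eq_square algebra_simps)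
    then have "4*\<beta>^2 - 5*\<beta> \<ge> -1" using assms by (smt (verit) zero_le_power2)
    then show ?thesis using powers assms unfolding l2_def by linarith
  qed
  moreover have "4*l2*(l0 + l1*x + l2*x^2) = (2*l2*x + l1)^2 - (l1^2 - 4*l0*l2)" by algebra
  ultimately have "l0 + l1*x + l2*x^2 > 0"
    by (smt (verit) zero_le_power2 zero_less_mult_iff)
  then show ?thesis using quadratic by simp
qed

lemma gbdf3_at_pi:
  "trig_poly 3 (gbdf3_a \<beta>) pi = of_real ((6*\<beta>^2 + 6*\<beta> - 2) / 3)"
  "trig_poly 3 (gbdf3_b \<beta>) pi = of_real ((6*\<beta>^2 - 3) / 3)"
  "trig_poly 3 (gbdf3_c \<beta>) pi = of_real ((6*\<beta>^2 + 12*\<beta> + 3) / 3)"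
  unfolding trig_poly_3_at_pi gbdf3_coeffs by (simp_all add: field_simps)

lemma norm_trig_poly_gbdf3_a_ge_1:
  assumes "\<beta> \<ge> 1"
  shows "cmod (trig_poly 3 (gbdf3_a \<beta>) t) \<ge> 1"
proof -
  have "(cmod (trig_poly 3 (gbdf3_a \<beta>) t))\<^sup>2 \<ge> 1\<^sup>2"
    unfolding norm_trig_poly_3_squared using gbdf3_a_corr_ge_1[OF assms] by simp
  then show ?thesis by (rule power2_le_imp_le) simp
qed

lemma sigma_F_gbdf3:
  assumes "\<beta> \<ge> 1"
  shows "sigma_F 3 (gbdf3_a \<beta>) = 1"
  unfolding sigma_F_def
proof (rule cSup_eq_maximum)
  have "cmod (1 / trig_poly 3 (gbdf3_a \<beta>) 0) = 1"
    unfolding trig_poly_3_at_0 gbdf3_coeffs by (simp add: field_simps)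
  then show "1 \<in> (\<lambda>t. cmod (1 / trig_poly 3 (gbdf3_a \<beta>) t)) ` {0..<2*pi}"
    using pi_gt_zero by (auto intro!: rev_image_eqI[where x = 0])
  show "y \<le> 1" if "y \<in> (\<lambda>t. cmod (1 / trig_poly 3 (gbdf3_a \<beta>) t)) ` {0..<2*pi}" for y
    using that norm_trig_poly_gbdf3_a_ge_1[OF assms] by (auto simp: norm_divide divide_le_eq)
qed

lemma sigma_E_gbdf3:
  assumes "\<beta> \<ge> 1"
  shows "sigma_E 3 (gbdf3_a \<beta>) (gbdf3_c \<beta>) = (6*\<beta>^2 + 12*\<beta> + 3) / (6*\<beta>^2 + 6*\<beta> - 2)"
  unfolding sigma_E_def
proof (rule cSup_eq_maximum)
  define N where "N = 6*\<beta>^2 + 12*\<beta> + 3"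
  define D where "D = 6*\<beta>^2 + 6*\<beta> - 2"
  have "\<beta>^2 \<ge> 1" using assms by (simp add: one_le_power)
  then have "N > 0" "D > 0" using assms unfolding N_def D_def by linarith+
  have "cmod (trig_poly 3 (gbdf3_c \<beta>) pi / trig_poly 3 (gbdf3_a \<beta>) pi) = N / D"
    unfolding gbdf3_at_pi N_def[symmetric] D_def[symmetric]
    using \<open>N > 0\<close> \<open>D > 0\<close> by (simp add: norm_divide)
  then show "N / D \<in> (\<lambda>t. cmod (trig_poly 3 (gbdf3_c \<beta>) t / trig_poly 3 (gbdf3_a \<beta>) t)) ` {0..<2*pi}"
    using pi_gt_zero by (auto intro!: rev_image_eqI[where x = pi])
  have "cmod (trig_poly 3 (gbdf3_c \<beta>) t / trig_poly 3 (gbdf3_a \<beta>) t) \<le> N / D" for t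
  proof -
    have "(D * cmod (trig_poly 3 (gbdf3_c \<beta>) t))\<^sup>2 \<le> (N * cmod (trig_poly 3 (gbdf3_a \<beta>) t))\<^sup>2"
      unfolding power_mult_distrib norm_trig_poly_3_squared D_def N_def
      using gbdf3_c_corr_le[OF assms] cos_ge_minus_one cos_le_one by blast
    then have "D * cmod (trig_poly 3 (gbdf3_c \<beta>) t) \<le> N * cmod (trig_poly 3 (gbdf3_a \<beta>) t)"
      by (rule power2_le_imp_le) (use \<open>N > 0\<close> in simp)
    moreover have "cmod (trig_poly 3 (gbdf3_a \<beta>) t) > 0"
      using norm_trig_poly_gbdf3_a_ge_1[OF assms, of t] by linarith
    ultimately show ?thesis
      using \<open>D > 0\<close> by (simp add: norm_divide divide_simps mult.commute)
  qed
  then show "y \<le> N / D"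
    if "y \<in> (\<lambda>t. cmod (trig_poly 3 (gbdf3_c \<beta>) t / trig_poly 3 (gbdf3_a \<beta>) t)) ` {0..<2*pi}" for y
    using that by blast
qed

lemma trig_poly_gbdf3_b: "trig_poly (Suc 3) (gbdf3_b \<beta>) t = trig_poly 3 (gbdf3_b \<beta>) t"
  by (rule trig_poly_Suc_eq) (simp add: gbdf3_coeffs)

lemma Re_gbdf3_b_divide_a_gt:
  assumes "\<beta> \<ge> 1"
  shows "(6*\<beta>^2 - 4) / (6*\<beta>^2 + 6*\<beta> - 2)
           < Re (trig_poly (Suc 3) (gbdf3_b \<beta>) t / trig_poly 3 (gbdf3_a \<beta>) t)"
proof -
  have "\<beta>^2 \<ge> 1" using assms by (simp add: one_le_power)
  then have "6*\<beta>^2 + 6*\<beta> - 2 > 0" using assms by linarith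
  moreover have "trig3_corr (gbdf3_a \<beta>) (gbdf3_a \<beta>) (cos t) > 0"
    using gbdf3_a_corr_ge_1[OF assms] cos_ge_minus_one cos_le_one by (smt (verit))
  ultimately show ?thesis
    unfolding trig_poly_gbdf3_b Re_divide_trig_poly_3
    using gbdf3_b_corr_ge[OF assms, of "cos t"] by (simp add: divide_simps mult.commute)
qed

lemma lambda_I_gbdf3_ge:
  assumes "\<beta> \<ge> 1"
  shows "(6*\<beta>^2 - 4) / (6*\<beta>^2 + 6*\<beta> - 2) \<le> lambda_I 3 (gbdf3_a \<beta>) (gbdf3_b \<beta>)"
  unfolding lambda_I_def
  using Re_gbdf3_b_divide_a_gt[OF assms] pi_gt_zero by (intro cINF_greatest less_imp_le) auto

lemma lambda_I_gbdf3_le: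
  assumes "\<beta> \<ge> 1"
  shows "lambda_I 3 (gbdf3_a \<beta>) (gbdf3_b \<beta>) \<le> (6*\<beta>^2 - 3) / (6*\<beta>^2 + 6*\<beta> - 2)"
proof -
  let ?ratio = "\<lambda>t. Re (trig_poly (Suc 3) (gbdf3_b \<beta>) t / trig_poly 3 (gbdf3_a \<beta>) t)"
  have "bdd_below (?ratio ` {0..<2*pi})"
    using Re_gbdf3_b_divide_a_gt[OF assms] by (intro bdd_belowI2 less_imp_le)
  then have "lambda_I 3 (gbdf3_a \<beta>) (gbdf3_b \<beta>) \<le> ?ratio pi"
    unfolding lambda_I_def using pi_gt_zero by (intro cINF_lower) auto
  also have "\<dots> = (6*\<beta>^2 - 3) / (6*\<beta>^2 + 6*\<beta> - 2)"
  proof -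
    have cancel_3: "(u / 3) / (v / 3) = u / v" for u v :: real by simp
    show ?thesis
      unfolding trig_poly_gbdf3_b gbdf3_at_pi of_real_divide[symmetric] Re_complex_of_real
      by (rule cancel_3)
  qed
  finally show ?thesis .
qed

theorem mainTheorem7:
  fixes \<beta> :: real
  assumes "\<beta> \<ge> 1"
  shows "sigma_F 3 (gbdf3_a \<beta>) = 1 \<and>
     sigma_E 3 (gbdf3_a \<beta>) (gbdf3_c \<beta>) = (6*\<beta>^2 + 12*\<beta> + 3) / (6*\<beta>^2 + 6*\<beta> - 2) \<and>
     (6*\<beta>^2 - 4) / (6*\<beta>^2 + 6*\<beta> - 2) \<le> lambda_I 3 (gbdf3_a \<beta>) (gbdf3_b \<beta>) \<and>
     lambda_I 3 (gbdf3_a \<beta>) (gbdf3_b \<beta>) \<le> (6*\<beta>^2 - 3) / (6*\<beta>^2 + 6*\<beta> - 2) \<and>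
     (6*\<beta>^2 - 4) / (6*\<beta>^2 + 12*\<beta> + 3) \<le> I_IE 3 (gbdf3_a \<beta>) (gbdf3_b \<beta>) (gbdf3_c \<beta>) \<and>
     I_IE 3 (gbdf3_a \<beta>) (gbdf3_b \<beta>) (gbdf3_c \<beta>) \<le> (6*\<beta>^2 - 3) / (6*\<beta>^2 + 12*\<beta> + 3)"
proof -
  define D where "D = 6*\<beta>^2 + 6*\<beta> - 2"
  define N where "N = 6*\<beta>^2 + 12*\<beta> + 3"
  define lam where "lam = lambda_I 3 (gbdf3_a \<beta>) (gbdf3_b \<beta>)"
  have "\<beta>^2 \<ge> 1" using assms by (simp add: one_le_power)
  then have "D > 0" "N > 0" using assms unfolding D_def N_def by linarith+
  have lam_bounds: "6*\<beta>^2 - 4 \<le> lam * D" "lam * D \<le> 6*\<beta>^2 - 3"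
    using lambda_I_gbdf3_ge[OF assms] lambda_I_gbdf3_le[OF assms] \<open>D > 0\<close>
    unfolding lam_def D_def by (simp_all add: field_simps)
  have "I_IE 3 (gbdf3_a \<beta>) (gbdf3_b \<beta>) (gbdf3_c \<beta>) = lam * D / N"
    unfolding I_IE_def sigma_E_gbdf3[OF assms] lam_def D_def N_def by simp
  then have "(6*\<beta>^2 - 4) / N \<le> I_IE 3 (gbdf3_a \<beta>) (gbdf3_b \<beta>) (gbdf3_c \<beta>)"
    "I_IE 3 (gbdf3_a \<beta>) (gbdf3_b \<beta>) (gbdf3_c \<beta>) \<le> (6*\<beta>^2 - 3) / N"
    using lam_bounds \<open>N > 0\<close> by (simp_all add: divide_right_mono)
  then show ?thesis
    using sigma_F_gbdf3 sigma_E_gbdf3 lambda_I_gbdf3_ge lambda_I_gbdf3_le assms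
    unfolding N_def by blast
qed

end
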